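(* Let $n>2$, let $d\subseteq 2\times(n-2)$ be a Young diagram, and let $d^|=\{s,t\}$ with $1\le s<t\le n$ be its set of vertical steps. For odd integers $0<a<b<2n$ let $I_{a,b}=\{e^{\frac{\pi}{n}ia},e^{\frac{\pi}{n}ib}\}$ (every 2-element subset of the roots of $\zeta^n=-1$ has this form). Then $S_d(I_{a,b})=0$ if and only if $n$ divides $\frac{b-a}{2}(t-s)$.
   Context: A Young diagram $d\subseteq 2\times(n-2)$ has row lengths $n-2\ge d_1\ge d_2\ge0$. Its profile path runs from the top-right corner to the bottom-left corner of the $2\times(n-2)$ rectangle in $n$ unit steps, labelled $1,\dots,n$ in order; $d^|\subset\{1,\dots,n\}$ is the set of labels of the two vertical steps. $S_d(z_1,z_2)=\sum_T z_1^{t_1}z_2^{t_2}$ is the two-variable Schur polynomial, summing over semistandard tableaux $T$ of shape $d$ with entries in $\{1,2\}$ (rows weakly increasing, columns strictly increasing), $t_i$ the number of entries equal to $i$; being symmetric, it can be evaluated on an unordered 2-element set. *)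

theory Defs
  imports Complex_Main
begin

text \<open>A Young diagram d inside the 2 x (n-2) rectangle is given by its row lengths
  d1 (top row) and d2 (bottom row) with n-2 >= d1 >= d2 >= 0.\<close>

definition young_diagram :: "nat \<Rightarrow> nat \<Rightarrow> nat \<Rightarrow> bool" where
  "young_diagram n d1 d2 \<longleftrightarrow> d2 \<le> d1 \<and> d1 \<le> n - 2"

definition cells :: "nat \<Rightarrow> nat \<Rightarrow> (nat \<times> nat) set" where
  "cells d1 d2 = {(i, j). (i = 0 \<and> j < d1) \<or> (i = 1 \<and> j < d2)}"

datatype step = H | V

text \<open>Profile path from the top-right corner to the bottom-left corner of the
  2 x (n-2) rectangle: steps go left (H) or down (V) along the boundary of d.\<close>
definition profile :: "nat \<Rightarrow> nat \<Rightarrow> nat \<Rightarrow> step list" where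
  "profile n d1 d2 = replicate (n - 2 - d1) H @ [V] @ replicate (d1 - d2) H @ [V] @ replicate d2 H"

definition vsteps :: "nat \<Rightarrow> nat \<Rightarrow> nat \<Rightarrow> nat set" where
  "vsteps n d1 d2 = {k. 1 \<le> k \<and> k \<le> length (profile n d1 d2) \<and> profile n d1 d2 ! (k - 1) = V}"

definition ssyt :: "nat \<Rightarrow> nat \<Rightarrow> (nat \<Rightarrow> nat \<Rightarrow> nat) set" where
  "ssyt d1 d2 = {T. (\<forall>i j. (i, j) \<notin> cells d1 d2 \<longrightarrow> T i j = 0)
      \<and> (\<forall>(i, j) \<in> cells d1 d2. T i j \<in> {1, 2})
      \<and> (\<forall>i j j'. (i, j) \<in> cells d1 d2 \<and> (i, j') \<in> cells d1 d2 \<and> j \<le> j' \<longrightarrow> T i j \<le> T i j')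
      \<and> (\<forall>j. (1, j) \<in> cells d1 d2 \<longrightarrow> T 0 j < T 1 j)}"

definition tcount :: "nat \<Rightarrow> nat \<Rightarrow> (nat \<Rightarrow> nat \<Rightarrow> nat) \<Rightarrow> nat \<Rightarrow> nat" where
  "tcount d1 d2 T v = card {(i, j) \<in> cells d1 d2. T i j = v}"

definition schur :: "nat \<Rightarrow> nat \<Rightarrow> complex \<Rightarrow> complex \<Rightarrow> complex" where
  "schur d1 d2 z1 z2 = (\<Sum>T\<in>ssyt d1 d2. z1 ^ tcount d1 d2 T 1 * z2 ^ tcount d1 d2 T 2)"

definition zroot :: "nat \<Rightarrow> nat \<Rightarrow> complex" where
  "zroot n a = exp (complex_of_real (pi * real a / real n) * \<i>)"

end

theory Submission
  imports Defs "HOL-Analysis.Complex_Transcendental"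
begin

(* A semistandard tableau of two-row shape with entries 1, 2 has only 2s in its bottom row, so it
   is determined by the number of 1s in its top row; hence
   S_d(x, y) = (x y)^d2 * h_m(x, y) with m = d1 - d2 and h_m the complete homogeneous polynomial.
   The vertical steps are s = n - 1 - d1 and t = n - d2, so t - s = m + 1, and for x \<noteq> y we have
   (x - y) h_m(x, y) = x^(m+1) - y^(m+1).  For x = e^(\<pi>ia/n), y = e^(\<pi>ib/n) the latter vanishes
   iff e^(\<pi>i(b-a)(m+1)/n) = 1, i.e. iff 2n divides (b - a)(t - s). *)

lemma nth_two_V_path:
  assumes "i < p + m + q + 2"
  shows "(replicate p H @ V # replicate m H @ V # replicate q H) ! i = V \<longleftrightarrow> i = p \<or> i = p + m + 1"
  using assms by (auto simp: nth_append nth_Cons')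

lemma vsteps_eq:
  assumes "young_diagram n d1 d2" "n > 2"
  shows "vsteps n d1 d2 = {n - 1 - d1, n - d2}"
proof -
  define p m where "p = n - 2 - d1" and "m = d1 - d2"
  have path: "profile n d1 d2 = replicate p H @ V # replicate m H @ V # replicate d2 H"
    by (simp add: profile_def p_def m_def)
  have "k \<in> vsteps n d1 d2 \<longleftrightarrow> k = p + 1 \<or> k = p + m + 2" for k
  proof -
    have "k \<in> vsteps n d1 d2 \<longleftrightarrow> 1 \<le> k \<and> k - 1 < p + m + d2 + 2 \<and> profile n d1 d2 ! (k - 1) = V"
      unfolding vsteps_def path by auto
    also have "\<dots> \<longleftrightarrow> k = p + 1 \<or> k = p + m + 2"
      using nth_two_V_path[of "k - 1" p m d2] unfolding path by auto
    finally show ?thesis .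
  qed
  moreover have "p + 1 = n - 1 - d1" "p + m + 2 = n - d2"
    using assms by (auto simp: young_diagram_def p_def m_def)
  ultimately show ?thesis
    by auto
qed

lemma mono_two_valued_is_step:
  fixes f :: "nat \<Rightarrow> nat"
  assumes "\<And>j. j < d \<Longrightarrow> f j \<in> {1, 2}"
    and "\<And>i j. i \<le> j \<Longrightarrow> j < d \<Longrightarrow> f i \<le> f j"
  shows "\<exists>c\<le>d. \<forall>j<d. f j = (if j < c then 1 else 2)"
  using assms
proof (induction d)
  case 0
  then show ?case by simp
next
  case (Suc d)
  then obtain c where c: "c \<le> d" "\<forall>j<d. f j = (if j < c then 1 else 2)"
    by auto
  show ?case
  proof (cases "f d = 2")
    case True
    with c show ?thesis by (auto simp: less_Suc_eq intro!: exI[of _ c])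
  next
    case False
    then have "f j = 1" if "j < Suc d" for j
      using Suc.prems that
      by (metis insert_iff le_antisym less_Suc_eq_le one_le_numeral order_refl singleton_iff)
    then show ?thesis by (intro exI[of _ "Suc d"]) auto
  qed
qed

definition top_ones_tableau :: "nat \<Rightarrow> nat \<Rightarrow> nat \<Rightarrow> nat \<Rightarrow> nat \<Rightarrow> nat" where
  "top_ones_tableau d1 d2 k i j =
     (if i = 0 \<and> j < d1 then (if j < d2 + k then 1 else 2) else if i = 1 \<and> j < d2 then 2 else 0)"

lemma top_ones_tableau_in_ssyt:
  "d2 \<le> d1 \<Longrightarrow> k \<le> d1 - d2 \<Longrightarrow> top_ones_tableau d1 d2 k \<in> ssyt d1 d2"
  unfolding ssyt_def top_ones_tableau_def cells_def by auto

lemma inj_on_top_ones_tableau: "inj_on (top_ones_tableau d1 d2) {..d1 - d2}"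
proof
  fix k l assume "k \<in> {..d1 - d2}" "l \<in> {..d1 - d2}"
    and eq: "top_ones_tableau d1 d2 k = top_ones_tableau d1 d2 l"
  have "top_ones_tableau d1 d2 k 0 (d2 + min k l) = top_ones_tableau d1 d2 l 0 (d2 + min k l)"
    using eq by simp
  then show "k = l"
    using \<open>k \<in> _\<close> \<open>l \<in> _\<close> unfolding top_ones_tableau_def by (auto split: if_splits simp: min_def)
qed

lemma ssyt_eq_top_ones_tableaux:
  assumes "d2 \<le> d1"
  shows "ssyt d1 d2 = top_ones_tableau d1 d2 ` {..d1 - d2}"
proof
  show "top_ones_tableau d1 d2 ` {..d1 - d2} \<subseteq> ssyt d1 d2"
    using assms top_ones_tableau_in_ssyt by auto
next
  show "ssyt d1 d2 \<subseteq> top_ones_tableau d1 d2 ` {..d1 - d2}"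
  proof
    fix T assume T: "T \<in> ssyt d1 d2"
    have bottom: "T 0 j = 1 \<and> T 1 j = 2" if "j < d2" for j
    proof -
      have "T 0 j \<in> {1, 2}" "T 1 j \<in> {1, 2}" "T 0 j < T 1 j"
        using T that assms unfolding ssyt_def cells_def by auto
      then show ?thesis by auto
    qed
    obtain c where "c \<le> d1" and top: "\<forall>j<d1. T 0 j = (if j < c then 1 else 2)"
      using mono_two_valued_is_step[of d1 "T 0"] T unfolding ssyt_def cells_def by auto
    moreover have "d2 \<le> c"
      using bottom[of c] top assms by (cases "c < d2") auto
    moreover have "T i j = 0" if "(i, j) \<notin> cells d1 d2" for i j
      using T that unfolding ssyt_def by auto
    ultimately have "T = top_ones_tableau d1 d2 (c - d2)"
      using bottom by (auto simp: top_ones_tableau_def cells_def fun_eq_iff)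
    then show "T \<in> top_ones_tableau d1 d2 ` {..d1 - d2}"
      using \<open>c \<le> d1\<close> by auto
  qed
qed

lemma tcount_top_ones_tableau:
  assumes "d2 \<le> d1" "k \<le> d1 - d2"
  shows "tcount d1 d2 (top_ones_tableau d1 d2 k) 1 = d2 + k"
    and "tcount d1 d2 (top_ones_tableau d1 d2 k) 2 = d2 + (d1 - d2 - k)"
proof -
  have "{(i, j) \<in> cells d1 d2. top_ones_tableau d1 d2 k i j = 1} = {0} \<times> {..<d2 + k}"
    using assms unfolding cells_def top_ones_tableau_def by auto
  then show "tcount d1 d2 (top_ones_tableau d1 d2 k) 1 = d2 + k"
    unfolding tcount_def by simp
  have "{(i, j) \<in> cells d1 d2. top_ones_tableau d1 d2 k i j = 2} =
      {0} \<times> {d2 + k..<d1} \<union> {1} \<times> {..<d2}"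
    using assms unfolding cells_def top_ones_tableau_def by auto
  moreover have "card ({0::nat} \<times> {d2 + k..<d1} \<union> {1} \<times> {..<d2}) = (d1 - (d2 + k)) + d2"
    by (subst card_Un_disjoint) auto
  ultimately show "tcount d1 d2 (top_ones_tableau d1 d2 k) 2 = d2 + (d1 - d2 - k)"
    unfolding tcount_def using assms by simp
qed

lemma schur_two_rows:
  assumes "d2 \<le> d1"
  shows "schur d1 d2 x y = (x * y) ^ d2 * (\<Sum>k\<le>d1 - d2. x ^ k * y ^ (d1 - d2 - k))"
proof -
  let ?T = "top_ones_tableau d1 d2"
  have "schur d1 d2 x y = (\<Sum>k\<le>d1 - d2. x ^ tcount d1 d2 (?T k) 1 * y ^ tcount d1 d2 (?T k) 2)"
    unfolding schur_def ssyt_eq_top_ones_tableaux[OF assms]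
    by (simp add: sum.reindex[OF inj_on_top_ones_tableau])
  also have "\<dots> = (\<Sum>k\<le>d1 - d2. (x * y) ^ d2 * (x ^ k * y ^ (d1 - d2 - k)))"
  proof (rule sum.cong)
    fix k assume "k \<in> {..d1 - d2}"
    then have "tcount d1 d2 (?T k) 1 = d2 + k" "tcount d1 d2 (?T k) 2 = d2 + (d1 - d2 - k)"
      using tcount_top_ones_tableau[OF assms] by auto
    then show "x ^ tcount d1 d2 (?T k) 1 * y ^ tcount d1 d2 (?T k) 2 =
        (x * y) ^ d2 * (x ^ k * y ^ (d1 - d2 - k))"
      by (simp add: power_add power_mult_distrib mult_ac)
  qed simp
  finally show ?thesis by (simp add: sum_distrib_left)
qed

lemma complete_homogeneous_eq_0_iff:
  fixes x y :: "'a :: field"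
  assumes "x \<noteq> y"
  shows "(\<Sum>k\<le>m. x ^ k * y ^ (m - k)) = 0 \<longleftrightarrow> x ^ Suc m = y ^ Suc m"
proof -
  have "x ^ Suc m - y ^ Suc m = (x - y) * (\<Sum>k\<le>m. x ^ k * y ^ (m - k))"
    using diff_power_eq_sum[of x m y] by (simp add: lessThan_Suc_atMost)
  then have "x ^ Suc m = y ^ Suc m \<longleftrightarrow> (x - y) * (\<Sum>k\<le>m. x ^ k * y ^ (m - k)) = 0"
    by (metis right_minus_eq)
  then show ?thesis
    using assms by simp
qed

lemma zroot_add: "zroot n (a + b) = zroot n a * zroot n b"
  unfolding zroot_def by (simp add: add_divide_distrib distrib_left distrib_right flip: exp_add)

lemma zroot_power: "zroot n a ^ k = zroot n (a * k)"
  unfolding zroot_def by (simp add: exp_of_nat_mult[symmetric] mult_ac)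

lemma zroot_nonzero: "zroot n a \<noteq> 0"
  by (simp add: zroot_def)

lemma zroot_eq_1_iff:
  assumes "n > 0"
  shows "zroot n a = 1 \<longleftrightarrow> 2 * n dvd a"
proof -
  have "pi * real a / real n = of_int (2 * j) * pi \<longleftrightarrow> int a = int (2 * n) * j" for j
  proof -
    have "pi * real a / real n = of_int (2 * j) * pi \<longleftrightarrow> real a = 2 * real n * of_int j"
      using assms by (auto simp: field_simps)
    also have "\<dots> \<longleftrightarrow> of_int (int a) = (of_int (int (2 * n) * j) :: real)"
      by simp
    finally show ?thesis
      by (simp only: of_int_eq_iff)
  qed
  then have "zroot n a = 1 \<longleftrightarrow> int (2 * n) dvd int a"
    by (simp add: zroot_def exp_eq_1 dvd_def)
  then show ?thesis
    by (simp only: int_dvd_int_iff)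
qed

lemma zroot_power_eq_iff:
  assumes "n > 0" "a \<le> b"
  shows "zroot n a ^ k = zroot n b ^ k \<longleftrightarrow> 2 * n dvd (b - a) * k"
proof -
  have "zroot n b ^ k = zroot n a ^ k * zroot n ((b - a) * k)"
    using assms(2) zroot_add[of n a "b - a"] by (simp add: power_mult_distrib zroot_power)
  then have "zroot n a ^ k = zroot n b ^ k \<longleftrightarrow> zroot n ((b - a) * k) = 1"
    using zroot_nonzero[of n a] by auto
  then show ?thesis
    using zroot_eq_1_iff[OF assms(1)] by simp
qed

lemma double_dvd_mult_iff_half:
  fixes m n k :: nat
  assumes "even m"
  shows "2 * n dvd m * k \<longleftrightarrow> n dvd (m div 2) * k"
  using assms by (auto elim!: evenE simp: mult.assoc)

theorem lemma4p7:
  fixes n d1 d2 s t a b :: nat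
  assumes "n > 2"
    and "young_diagram n d1 d2"
    and "vsteps n d1 d2 = {s, t}" and "1 \<le> s" and "s < t" and "t \<le> n"
    and "odd a" and "odd b" and "0 < a" and "a < b" and "b < 2 * n"
  shows "schur d1 d2 (zroot n a) (zroot n b) = 0 \<longleftrightarrow> n dvd ((b - a) div 2) * (t - s)"
proof -
  have "d2 \<le> d1" "d1 \<le> n - 2"
    using assms(2) by (auto simp: young_diagram_def)
  moreover have "{s, t} = {n - 1 - d1, n - d2}"
    using vsteps_eq assms(1-3) by simp
  ultimately have "s = n - 1 - d1" "t = n - d2"
    using assms(1,5) by (auto simp: doubleton_eq_iff)
  then have ts: "t - s = Suc (d1 - d2)"
    using \<open>d2 \<le> d1\<close> \<open>d1 \<le> n - 2\<close> assms(1) by linarith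
  have "\<not> 2 * n dvd (b - a) * 1"
    using assms(10,11) by (auto dest: dvd_imp_le)
  then have "zroot n a \<noteq> zroot n b"
    using zroot_power_eq_iff[of n a b 1] assms(1,10) by auto
  have "schur d1 d2 (zroot n a) (zroot n b) = 0 \<longleftrightarrow>
      (\<Sum>k\<le>d1 - d2. zroot n a ^ k * zroot n b ^ (d1 - d2 - k)) = 0"
    by (simp add: schur_two_rows[OF \<open>d2 \<le> d1\<close>] zroot_nonzero)
  also have "\<dots> \<longleftrightarrow> zroot n a ^ (t - s) = zroot n b ^ (t - s)"
    unfolding ts by (rule complete_homogeneous_eq_0_iff) fact
  also have "\<dots> \<longleftrightarrow> 2 * n dvd (b - a) * (t - s)"
    using zroot_power_eq_iff assms(1,10) by simp
  also have "\<dots> \<longleftrightarrow> n dvd ((b - a) div 2) * (t - s)"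
    using assms(7,8,10) by (simp add: double_dvd_mult_iff_half)
  finally show ?thesis .
qed

end
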